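(* For every graph $G$, $$\Gamma(G) \le \gamma_{\rm i}(G) \le \gamma_{\rm gr}(G).$$ Moreover, $\gamma_{\rm i}$ is incomparable with both $\gamma_g$ and $\mathrm{IR}$; that is, there exist graphs $G$ with $\gamma_{\rm i}(G) > \gamma_g(G)$ and graphs $G$ with $\gamma_{\rm i}(G) < \gamma_g(G)$, and there exist graphs $G$ with $\gamma_{\rm i}(G) > \mathrm{IR}(G)$ and graphs $G$ with $\gamma_{\rm i}(G) < \mathrm{IR}(G)$.
   Context: All graphs are finite and simple. $N[v]$ is the closed neighborhood of $v$, and $N[S]=\bigcup_{v\in S}N[v]$. A set $D$ is dominating if $N[D]=V(G)$. Indicated domination game on $G$: two players, Dominator and Staller, alternate. In each round Dominator indicates a vertex $v$ not yet dominated by the vertices previously selected by Staller, and Staller must select a vertex of $N[v]$, adding it to a set $D$. The game ends when $D$ is a dominating set. Dominator wants to minimize $|D|$ and Staller to maximize it; the size of $D$ under optimal play of both is the indicated domination number $\gamma_{\rm i}(G)$. $\Gamma(G)$ (upper domination number) is the maximum size of a minimal dominating set. For $S\subseteq V(G)$ and $x\in S$, a private neighbor of $x$ with respect to $S$ is a vertex of $N[S]\setminus N[S\setminus\{x\}]$; $S$ is irredundant if every vertex of $S$ has a private neighbor with respect to $S$, and $\mathrm{IR}(G)$ is the maximum size of a maximal irredundant set. A sequence $(v_1,\dots,v_k)$ of vertices is a dominating sequence if $N[v_i]\setminus\bigcup_{j<i}N[v_j]\ne\emptyset$ for each $i$ and $\{v_1,\dots,v_k\}$ dominates $G$; the Grundy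 domination number $\gamma_{\rm gr}(G)$ is the maximum length of a dominating sequence. Domination game: Dominator and Staller alternately select vertices of $G$, Dominator starting; a move is legal if the selected vertex dominates at least one vertex not dominated by previously selected vertices; the game ends when no legal move exists. Dominator wants to minimize and Staller to maximize the number of moves; the number of moves under optimal play is the game domination number $\gamma_g(G)$. *)

theory Defs
  imports Main
begin

definition fin_graph :: "'a set \<Rightarrow> ('a \<Rightarrow> 'a \<Rightarrow> bool) \<Rightarrow> bool" where
  "fin_graph V E \<longleftrightarrow> finite V \<and> (\<forall>u v. E u v \<longrightarrow> u \<in> V \<and> v \<in> V)
     \<and> (\<forall>u v. E u v \<longrightarrow> E v u) \<and> (\<forall>v. \<not> E v v)"

definition cnbhd :: "'a set \<Rightarrow> ('a \<Rightarrow> 'a \<Rightarrow> bool) \<Rightarrow> 'a \<Rightarrow> 'a set" where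
  "cnbhd V E v = {u \<in> V. u = v \<or> E v u}"

definition cnbhd_set :: "'a set \<Rightarrow> ('a \<Rightarrow> 'a \<Rightarrow> bool) \<Rightarrow> 'a set \<Rightarrow> 'a set" where
  "cnbhd_set V E S = (\<Union>v\<in>S. cnbhd V E v)"

definition dominating :: "'a set \<Rightarrow> ('a \<Rightarrow> 'a \<Rightarrow> bool) \<Rightarrow> 'a set \<Rightarrow> bool" where
  "dominating V E D \<longleftrightarrow> D \<subseteq> V \<and> cnbhd_set V E D = V"

definition minimal_dominating :: "'a set \<Rightarrow> ('a \<Rightarrow> 'a \<Rightarrow> bool) \<Rightarrow> 'a set \<Rightarrow> bool" where
  "minimal_dominating V E D \<longleftrightarrow> dominating V E D \<and> (\<forall>T. T \<subset> D \<longrightarrow> \<not> dominating V E T)"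

definition upper_domination :: "'a set \<Rightarrow> ('a \<Rightarrow> 'a \<Rightarrow> bool) \<Rightarrow> nat" where
  "upper_domination V E = Max (card ` {D. minimal_dominating V E D})"

definition irredundant :: "'a set \<Rightarrow> ('a \<Rightarrow> 'a \<Rightarrow> bool) \<Rightarrow> 'a set \<Rightarrow> bool" where
  "irredundant V E S \<longleftrightarrow> S \<subseteq> V \<and>
     (\<forall>x\<in>S. cnbhd_set V E S - cnbhd_set V E (S - {x}) \<noteq> {})"

definition maximal_irredundant :: "'a set \<Rightarrow> ('a \<Rightarrow> 'a \<Rightarrow> bool) \<Rightarrow> 'a set \<Rightarrow> bool" where
  "maximal_irredundant V E S \<longleftrightarrow> irredundant V E S \<and>
     (\<forall>T. S \<subset> T \<longrightarrow> \<not> irredundant V E T)"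

definition upper_irredundance :: "'a set \<Rightarrow> ('a \<Rightarrow> 'a \<Rightarrow> bool) \<Rightarrow> nat" where
  "upper_irredundance V E = Max (card ` {S. maximal_irredundant V E S})"

definition dominating_seq :: "'a set \<Rightarrow> ('a \<Rightarrow> 'a \<Rightarrow> bool) \<Rightarrow> 'a list \<Rightarrow> bool" where
  "dominating_seq V E xs \<longleftrightarrow> set xs \<subseteq> V \<and>
     (\<forall>i<length xs. cnbhd V E (xs ! i) - cnbhd_set V E (set (take i xs)) \<noteq> {}) \<and>
     cnbhd_set V E (set xs) = V"

definition grundy_domination :: "'a set \<Rightarrow> ('a \<Rightarrow> 'a \<Rightarrow> bool) \<Rightarrow> nat" where
  "grundy_domination V E = Max {length xs | xs. dominating_seq V E xs}"

text \<open>Indicated domination game. igv V E n D is the value (number of further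
  Staller selections under optimal play) from the position where Staller has
  selected the set D, with a fuel bound n. Dominator (minimiser) indicates an
  undominated vertex v, Staller (maximiser) selects a vertex of N[v].
  Every selection adds a new vertex, so fuel card V suffices.\<close>
fun igv :: "'a set \<Rightarrow> ('a \<Rightarrow> 'a \<Rightarrow> bool) \<Rightarrow> nat \<Rightarrow> 'a set \<Rightarrow> nat" where
  "igv V E 0 D = 0"
| "igv V E (Suc n) D =
     (if cnbhd_set V E D = V then 0
      else Min ((\<lambda>v. Max ((\<lambda>u. Suc (igv V E n (insert u D))) ` cnbhd V E v))
                 ` (V - cnbhd_set V E D)))"

definition indicated_domination :: "'a set \<Rightarrow> ('a \<Rightarrow> 'a \<Rightarrow> bool) \<Rightarrow> nat" where
  "indicated_domination V E = igv V E (card V) {}"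

text \<open>Domination game. dgv V E n S b: value from position where the set S of
  vertices has been selected and it is Dominator's turn iff b; fuel n.\<close>
definition legal_moves :: "'a set \<Rightarrow> ('a \<Rightarrow> 'a \<Rightarrow> bool) \<Rightarrow> 'a set \<Rightarrow> 'a set" where
  "legal_moves V E S = {v \<in> V. cnbhd V E v - cnbhd_set V E S \<noteq> {}}"

fun dgv :: "'a set \<Rightarrow> ('a \<Rightarrow> 'a \<Rightarrow> bool) \<Rightarrow> nat \<Rightarrow> 'a set \<Rightarrow> bool \<Rightarrow> nat" where
  "dgv V E 0 S b = 0"
| "dgv V E (Suc n) S b =
     (if legal_moves V E S = {} then 0
      else if b then Min ((\<lambda>v. Suc (dgv V E n (insert v S) False)) ` legal_moves V E S)
      else Max ((\<lambda>v. Suc (dgv V E n (insert v S) True)) ` legal_moves V E S))"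

definition game_domination :: "'a set \<Rightarrow> ('a \<Rightarrow> 'a \<Rightarrow> bool) \<Rightarrow> nat" where
  "game_domination V E = dgv V E (card V) {} True"

end

theory Submission
  imports Defs
begin

text \<open>\<open>\<Gamma> \<le> \<gamma>\<^sub>i\<close>: Staller fixes a minimal dominating set \<open>M\<close> of size \<open>\<Gamma>\<close> and always
  selects a vertex of \<open>M\<close> dominating the indicated vertex. Such a vertex exists and has not
  been selected before, and by minimality no proper subset of \<open>M\<close> dominates, so the game
  lasts until all of \<open>M\<close> is selected.

  \<open>\<gamma>\<^sub>i \<le> \<gamma>\<^sub>g\<^sub>r\<close>: every vertex Staller selects lies in the closed neighbourhood of a vertex
  that was undominated, so it dominates something new. Whatever both players do, the
  selections in order therefore form a dominating sequence.

  Incomparability is witnessed by the path \<open>P\<^sub>3\<close> (\<open>\<gamma>\<^sub>g = 1 < 2 = \<gamma>\<^sub>i\<close>), the cycle \<open>C\<^sub>5\<close>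
  (\<open>IR = 2 < 3 = \<gamma>\<^sub>i\<close>) and an eight-vertex graph with \<open>\<gamma>\<^sub>i \<le> 2\<close> but \<open>\<gamma>\<^sub>g \<ge> 3\<close> and
  \<open>IR \<ge> 3\<close>, the latter bounds coming from explicit strategies and an explicit maximal
  irredundant set.\<close>

lemma cnbhd_subset: "cnbhd V E v \<subseteq> V"
  by (auto simp: cnbhd_def)

lemma cnbhd_self: "v \<in> V \<Longrightarrow> v \<in> cnbhd V E v"
  by (simp add: cnbhd_def)

lemma cnbhd_commute:
  "fin_graph V E \<Longrightarrow> v \<in> V \<Longrightarrow> u \<in> cnbhd V E v \<Longrightarrow> v \<in> cnbhd V E u"
  by (auto simp: cnbhd_def fin_graph_def)

lemma cnbhd_set_subset: "cnbhd_set V E S \<subseteq> V"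
  by (auto simp: cnbhd_set_def cnbhd_def)

lemma cnbhd_set_mono: "S \<subseteq> T \<Longrightarrow> cnbhd_set V E S \<subseteq> cnbhd_set V E T"
  by (auto simp: cnbhd_set_def)

lemma cnbhd_set_carrier: "cnbhd_set V E V = V"
  by (auto simp: cnbhd_set_def cnbhd_def)

lemma cnbhd_set_iff: "v \<in> cnbhd_set V E S \<longleftrightarrow> (\<exists>x\<in>S. v \<in> cnbhd V E x)"
  by (simp add: cnbhd_set_def)


section \<open>The indicated domination game\<close>

declare igv.simps(2) [simp del]

lemma igv_dominated: "cnbhd_set V E D = V \<Longrightarrow> igv V E n D = 0"
  by (cases n) (simp_all add: igv.simps(2))

lemma igv_Suc_le:
  assumes "finite V" "v \<in> V - cnbhd_set V E D"
    and "\<And>u. u \<in> cnbhd V E v \<Longrightarrow> Suc (igv V E n (insert u D)) \<le> k"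
  shows "igv V E (Suc n) D \<le> k"
proof -
  let ?staller = "\<lambda>v. Max ((\<lambda>u. Suc (igv V E n (insert u D))) ` cnbhd V E v)"
  have "finite (cnbhd V E v)" "cnbhd V E v \<noteq> {}"
    using finite_subset[OF cnbhd_subset assms(1)] cnbhd_self[of v V E] assms(2) by auto
  then have "?staller v \<le> k"
    using assms(3) by simp
  moreover have "Min (?staller ` (V - cnbhd_set V E D)) \<le> ?staller v"
    using assms(1,2) by simp
  ultimately show ?thesis
    using assms(2) by (auto simp: igv.simps(2))
qed

lemma igv_Suc_ge:
  assumes "finite V" "cnbhd_set V E D \<noteq> V"
    and "\<And>v. v \<in> V - cnbhd_set V E D \<Longrightarrow> \<exists>u\<in>cnbhd V E v. k \<le> Suc (igv V E n (insert u D))"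
  shows "k \<le> igv V E (Suc n) D"
proof -
  let ?staller = "\<lambda>v. Max ((\<lambda>u. Suc (igv V E n (insert u D))) ` cnbhd V E v)"
  have "k \<le> ?staller v" if v: "v \<in> V - cnbhd_set V E D" for v
  proof -
    obtain u where "u \<in> cnbhd V E v" "k \<le> Suc (igv V E n (insert u D))"
      using assms(3)[OF v] by blast
    moreover have "finite (cnbhd V E v)"
      using finite_subset[OF cnbhd_subset assms(1)] .
    ultimately show ?thesis
      by (meson Max_ge finite_imageI image_eqI le_trans)
  qed
  moreover have "V - cnbhd_set V E D \<noteq> {}"
    using assms(2) cnbhd_set_subset[of V E D] by blast
  ultimately show ?thesis
    using assms(1,2) by (simp add: igv.simps(2))
qed


section \<open>Upper domination\<close>

lemma minimal_dominating_exists: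
  assumes "finite V"
  shows "\<exists>M. minimal_dominating V E M"
proof -
  have "dominating V E V"
    by (simp add: dominating_def cnbhd_set_carrier)
  then obtain M where M: "dominating V E M" "\<And>T. dominating V E T \<Longrightarrow> card M \<le> card T"
    using ex_has_least_nat[of "dominating V E" V card] by blast
  have "finite M"
    using M(1) assms finite_subset by (auto simp: dominating_def)
  then have "\<not> dominating V E T" if "T \<subset> M" for T
    using M(2) psubset_card_mono[OF _ that] by fastforce
  with M(1) show ?thesis
    unfolding minimal_dominating_def by blast
qed

lemma upper_domination_attained:
  assumes "finite V"
  shows "\<exists>M. minimal_dominating V E M \<and> card M = upper_domination V E"
proof -
  have "finite {M. minimal_dominating V E M}"
    using assms by (auto simp: minimal_dominating_def dominating_def
        intro: finite_subset[of _ "Pow V"])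
  moreover have "{M. minimal_dominating V E M} \<noteq> {}"
    using minimal_dominating_exists[OF assms] by blast
  ultimately have "upper_domination V E \<in> card ` {M. minimal_dominating V E M}"
    unfolding upper_domination_def by (intro Max_in) auto
  then show ?thesis
    by auto
qed

lemma dominating_meets_cnbhd:
  assumes "fin_graph V E" "dominating V E M" "v \<in> V - cnbhd_set V E D"
  shows "\<exists>x\<in>M - D. x \<in> cnbhd V E v"
proof -
  have "v \<in> cnbhd_set V E M"
    using assms(2,3) by (simp add: dominating_def)
  then obtain x where x: "x \<in> M" "v \<in> cnbhd V E x"
    by (auto simp: cnbhd_set_iff)
  then have "x \<notin> D"
    using assms(3) by (auto simp: cnbhd_set_iff)
  moreover have "x \<in> cnbhd V E v"
    using cnbhd_commute[OF assms(1) _ x(2)] x(1) assms(2) by (auto simp: dominating_def)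
  ultimately show ?thesis
    using x(1) by blast
qed

lemma card_diff_le_igv:
  assumes G: "fin_graph V E" and M: "minimal_dominating V E M"
    and "D \<subseteq> M" "card (V - D) \<le> n"
  shows "card (M - D) \<le> igv V E n D"
proof -
  have M_dom: "dominating V E M"
    using M by (simp add: minimal_dominating_def)
  then have fin: "finite V" "M \<subseteq> V"
    using G by (simp_all add: fin_graph_def dominating_def)
  show ?thesis
    using assms(3,4)
  proof (induction n arbitrary: D)
    case 0
    then have "M - D = {}"
      using fin by auto
    then show ?case
      by (metis card.empty le0)
  next
    case (Suc n)
    show ?case
    proof (cases "cnbhd_set V E D = V")
      case True
      then have "dominating V E D"
        using Suc.prems(1) fin(2) by (auto simp: dominating_def)
      then have "D = M"
        using M Suc.prems(1) unfolding minimal_dominating_def by blast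
      then show ?thesis
        by simp
    next
      case False
      show ?thesis
      proof (rule igv_Suc_ge[OF fin(1) False])
        fix v
        assume "v \<in> V - cnbhd_set V E D"
        then obtain x where x: "x \<in> M - D" "x \<in> cnbhd V E v"
          using dominating_meets_cnbhd[OF G M_dom] by blast
        then have "card (M - D) - 1 \<le> igv V E n (insert x D)"
          using Suc.IH[of "insert x D"] Suc.prems fin(2) by auto
        with x(2) show "\<exists>u\<in>cnbhd V E v. card (M - D) \<le> Suc (igv V E n (insert u D))"
          by (intro bexI[of _ x]) auto
      qed
    qed
  qed
qed

theorem upper_domination_le_indicated_domination:
  assumes "fin_graph V E"
  shows "upper_domination V E \<le> indicated_domination V E"
proof -
  have "finite V"
    using assms by (simp add: fin_graph_def)
  then obtain M where "minimal_dominating V E M" "card M = upper_domination V E"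
    using upper_domination_attained by blast
  then show ?thesis
    using card_diff_le_igv[OF assms, of M "{}" "card V"]
    by (simp add: indicated_domination_def)
qed


section \<open>Grundy domination\<close>

definition legal_seq :: "'a set \<Rightarrow> ('a \<Rightarrow> 'a \<Rightarrow> bool) \<Rightarrow> 'a list \<Rightarrow> bool" where
  "legal_seq V E xs \<longleftrightarrow> set xs \<subseteq> V \<and>
     (\<forall>i<length xs. cnbhd V E (xs ! i) - cnbhd_set V E (set (take i xs)) \<noteq> {})"

lemma dominating_seq_iff_legal_seq:
  "dominating_seq V E xs \<longleftrightarrow> legal_seq V E xs \<and> cnbhd_set V E (set xs) = V"
  by (simp add: dominating_seq_def legal_seq_def)

lemma legal_seq_Nil: "legal_seq V E []"
  by (simp add: legal_seq_def)

lemma legal_seq_snoc: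
  assumes "legal_seq V E xs" "u \<in> V" "cnbhd V E u - cnbhd_set V E (set xs) \<noteq> {}"
  shows "legal_seq V E (xs @ [u])"
  unfolding legal_seq_def
proof (intro conjI allI impI)
  show "set (xs @ [u]) \<subseteq> V"
    using assms(1,2) by (simp add: legal_seq_def)
  fix i
  assume "i < length (xs @ [u])"
  then consider "i < length xs" | "i = length xs"
    by fastforce
  then show "cnbhd V E ((xs @ [u]) ! i) - cnbhd_set V E (set (take i (xs @ [u]))) \<noteq> {}"
    using assms(1,3) by cases (simp_all add: legal_seq_def nth_append)
qed

lemma legal_seq_distinct:
  assumes "legal_seq V E xs"
  shows "distinct xs"
proof (rule ccontr)
  assume "\<not> distinct xs"
  then obtain i j where ij: "i < j" "j < length xs" "xs ! i = xs ! j"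
    unfolding distinct_conv_nth by (metis linorder_neqE_nat)
  then have "xs ! j \<in> set (take j xs)"
    by (metis length_take min.absorb4 nth_mem nth_take)
  then have "cnbhd V E (xs ! j) \<subseteq> cnbhd_set V E (set (take j xs))"
    by (auto simp: cnbhd_set_def)
  with assms ij(2) show False
    by (auto simp: legal_seq_def)
qed

lemma legal_seq_length_le_card:
  assumes "finite V" "legal_seq V E xs"
  shows "length xs \<le> card V"
proof -
  have "length xs = card (set xs)"
    using legal_seq_distinct[OF assms(2)] by (simp add: distinct_card)
  also have "\<dots> \<le> card V"
    using assms by (intro card_mono) (auto simp: legal_seq_def)
  finally show ?thesis .
qed

lemma length_le_grundy_domination:
  assumes "finite V" "dominating_seq V E xs"
  shows "length xs \<le> grundy_domination V E"
proof -
  have "{length xs | xs. dominating_seq V E xs} \<subseteq> {..card V}"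
    using legal_seq_length_le_card[OF assms(1)] by (auto simp: dominating_seq_iff_legal_seq)
  then have "finite {length xs | xs. dominating_seq V E xs}"
    using finite_subset by blast
  with assms(2) show ?thesis
    unfolding grundy_domination_def by (intro Max_ge) auto
qed

lemma dominating_seq_if_card_le_length:
  assumes "finite V" "legal_seq V E xs" "card V \<le> length xs"
  shows "dominating_seq V E xs"
proof -
  have "card (set xs) = card V"
    using legal_seq_length_le_card[OF assms(1,2)] legal_seq_distinct[OF assms(2)] assms(3)
    by (simp add: distinct_card)
  then have "set xs = V"
    using assms(1,2) by (intro card_subset_eq) (auto simp: legal_seq_def)
  with assms(2) show ?thesis
    by (simp add: dominating_seq_iff_legal_seq cnbhd_set_carrier)
qed

lemma legal_seq_snoc_cnbhd:
  assumes "fin_graph V E" "legal_seq V E xs" "v \<in> V - cnbhd_set V E (set xs)" "u \<in> cnbhd V E v"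
  shows "legal_seq V E (xs @ [u])"
proof (rule legal_seq_snoc[OF assms(2)])
  show "u \<in> V"
    using assms(4) cnbhd_subset[of V E v] by blast
  show "cnbhd V E u - cnbhd_set V E (set xs) \<noteq> {}"
    using cnbhd_commute[OF assms(1) _ assms(4)] assms(3) by blast
qed

lemma igv_add_length_le_grundy_domination:
  assumes G: "fin_graph V E" and "legal_seq V E xs" "card V \<le> n + length xs"
  shows "igv V E n (set xs) + length xs \<le> grundy_domination V E"
proof -
  have fin: "finite V"
    using G by (simp add: fin_graph_def)
  show ?thesis
    using assms(2,3)
  proof (induction n arbitrary: xs)
    case 0
    then show ?case
      using length_le_grundy_domination[OF fin] dominating_seq_if_card_le_length[OF fin] by simp
  next
    case (Suc n)
    show ?case
    proof (cases "cnbhd_set V E (set xs) = V")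
      case True
      then have "dominating_seq V E xs"
        using Suc.prems(1) by (simp add: dominating_seq_iff_legal_seq)
      then show ?thesis
        using True length_le_grundy_domination[OF fin] by (simp add: igv_dominated)
    next
      case False
      then obtain v where v: "v \<in> V - cnbhd_set V E (set xs)"
        using cnbhd_set_subset[of V E "set xs"] by blast
      have IH: "igv V E n (insert u (set xs)) + Suc (length xs) \<le> grundy_domination V E"
        if u: "u \<in> cnbhd V E v" for u
        using Suc.IH[OF legal_seq_snoc_cnbhd[OF G Suc.prems(1) v u]] Suc.prems(2) by simp
      have "igv V E (Suc n) (set xs) \<le> grundy_domination V E - length xs"
      proof (rule igv_Suc_le[OF fin v])
        fix u
        assume "u \<in> cnbhd V E v"
        from IH[OF this] show "Suc (igv V E n (insert u (set xs))) \<le> grundy_domination V E - length xs"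
          by simp
      qed
      moreover have "length xs \<le> grundy_domination V E"
        using IH[of v] cnbhd_self[of v V E] v by simp
      ultimately show ?thesis
        by simp
    qed
  qed
qed

theorem indicated_domination_le_grundy_domination:
  assumes "fin_graph V E"
  shows "indicated_domination V E \<le> grundy_domination V E"
  using igv_add_length_le_grundy_domination[OF assms legal_seq_Nil, of "card V"]
  by (simp add: indicated_domination_def)


declare dgv.simps(2) [simp del]

lemma finite_legal_moves: "finite V \<Longrightarrow> finite (legal_moves V E S)"
  by (simp add: legal_moves_def)

lemma dgv_Suc_Dominator_ge:
  assumes "finite V" "legal_moves V E S \<noteq> {}"
    and "\<And>v. v \<in> legal_moves V E S \<Longrightarrow> k \<le> Suc (dgv V E n (insert v S) False)"
  shows "k \<le> dgv V E (Suc n) S True"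
  using assms finite_legal_moves[OF assms(1)] by (simp add: dgv.simps(2))

lemma dgv_Suc_Staller_ge:
  assumes "finite V" "v \<in> legal_moves V E S" "k \<le> Suc (dgv V E n (insert v S) True)"
  shows "k \<le> dgv V E (Suc n) S False"
proof -
  have "Suc (dgv V E n (insert v S) True)
      \<le> Max ((\<lambda>v. Suc (dgv V E n (insert v S) True)) ` legal_moves V E S)"
    using assms(2) finite_legal_moves[OF assms(1)] by (intro Max_ge) auto
  with assms(2,3) show ?thesis
    by (auto simp: dgv.simps(2))
qed


section \<open>Upper irredundance\<close>

lemma irredundant_subset:
  assumes "irredundant V E T" "S \<subseteq> T"
  shows "irredundant V E S"
  unfolding irredundant_def
proof (intro conjI ballI)
  show "S \<subseteq> V"
    using assms unfolding irredundant_def by blast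
  fix x
  assume "x \<in> S"
  then have "cnbhd_set V E T - cnbhd_set V E (T - {x}) \<noteq> {}"
    using assms unfolding irredundant_def by blast
  then obtain p where p: "p \<in> cnbhd_set V E T" "p \<notin> cnbhd_set V E (T - {x})"
    by blast
  then have "p \<in> cnbhd V E x"
    by (auto simp: cnbhd_set_iff)
  then have "p \<in> cnbhd_set V E S"
    using \<open>x \<in> S\<close> by (auto simp: cnbhd_set_iff)
  moreover have "p \<notin> cnbhd_set V E (S - {x})"
    using p(2) cnbhd_set_mono[of "S - {x}" "T - {x}" V E] assms(2) by blast
  ultimately show "cnbhd_set V E S - cnbhd_set V E (S - {x}) \<noteq> {}"
    by blast
qed

lemma maximal_irredundant_iff:
  "maximal_irredundant V E S \<longleftrightarrow>
     irredundant V E S \<and> (\<forall>x\<in>V - S. \<not> irredundant V E (insert x S))"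
proof
  assume S: "irredundant V E S \<and> (\<forall>x\<in>V - S. \<not> irredundant V E (insert x S))"
  have "\<not> irredundant V E T" if "S \<subset> T" for T
  proof
    assume T: "irredundant V E T"
    obtain x where "x \<in> T - S"
      using \<open>S \<subset> T\<close> by blast
    moreover have "T \<subseteq> V"
      using T by (simp add: irredundant_def)
    moreover have "irredundant V E (insert x S)"
      using irredundant_subset[OF T] \<open>S \<subset> T\<close> \<open>x \<in> T - S\<close> by blast
    ultimately show False
      using S by blast
  qed
  with S show "maximal_irredundant V E S"
    unfolding maximal_irredundant_def by blast
qed (auto simp: maximal_irredundant_def)

lemma upper_irredundance_code [code]:
  "upper_irredundance V E = Max (card `
     Set.filter (\<lambda>S. irredundant V E S \<and> (\<forall>x\<in>V - S. \<not> irredundant V E (insert x S))) (Pow V))"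
proof -
  have "{S. maximal_irredundant V E S} =
      Set.filter (\<lambda>S. irredundant V E S \<and> (\<forall>x\<in>V - S. \<not> irredundant V E (insert x S))) (Pow V)"
    by (auto simp: maximal_irredundant_iff irredundant_def)
  then show ?thesis
    by (simp add: upper_irredundance_def)
qed

lemma card_le_upper_irredundance:
  assumes "finite V" "maximal_irredundant V E S"
  shows "card S \<le> upper_irredundance V E"
proof -
  have "{S. maximal_irredundant V E S} \<subseteq> Pow V"
    by (auto simp: maximal_irredundant_def irredundant_def)
  then have "finite {S. maximal_irredundant V E S}"
    using assms(1) finite_subset by blast
  with assms(2) show ?thesis
    unfolding upper_irredundance_def by (intro Max_ge) auto
qed


section \<open>Examples\<close>

definition edge_rel :: "(nat \<times> nat) list \<Rightarrow> nat \<Rightarrow> nat \<Rightarrow> bool" where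
  "edge_rel es u v \<longleftrightarrow> (u, v) \<in> set es \<or> (v, u) \<in> set es"

lemma fin_graph_edge_rel:
  assumes "\<forall>(u, v) \<in> set es. u < n \<and> v < n \<and> u \<noteq> v"
  shows "fin_graph {..<n} (edge_rel es)"
  using assms by (auto simp: fin_graph_def edge_rel_def)

definition path3 :: "nat \<Rightarrow> nat \<Rightarrow> bool" where
  "path3 = edge_rel [(1, 0), (0, 2)]"

definition cycle5 :: "nat \<Rightarrow> nat \<Rightarrow> bool" where
  "cycle5 = edge_rel [(0, 1), (1, 2), (2, 3), (3, 4), (4, 0)]"

definition graph8 :: "nat \<Rightarrow> nat \<Rightarrow> bool" where
  "graph8 = edge_rel [(0, 2), (0, 3), (0, 7), (1, 3), (1, 4), (1, 5), (1, 6), (2, 3), (2, 4),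
     (2, 7), (3, 7), (4, 5), (4, 6), (5, 6), (5, 7)]"

lemma fin_graph_path3: "fin_graph {..<3} path3"
  unfolding path3_def by (rule fin_graph_edge_rel) simp

lemma fin_graph_cycle5: "fin_graph {..<5} cycle5"
  unfolding cycle5_def by (rule fin_graph_edge_rel) simp

lemma fin_graph_graph8: "fin_graph {..<8} graph8"
  unfolding graph8_def by (rule fin_graph_edge_rel) simp

lemma path3_game_indicated_domination:
  "game_domination {..<3} path3 = 1 \<and> indicated_domination {..<3} path3 = 2"
  by code_simp

lemma cycle5_irredundance_indicated_domination:
  "upper_irredundance {..<5} cycle5 = 2 \<and> indicated_domination {..<5} cycle5 = 3"
  by code_simp

lemma indicated_domination_graph8: "indicated_domination {..<8} graph8 \<le> 2"
proof -
  let ?V = "{..<8::nat}"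
  have strategy: "\<forall>u\<in>cnbhd ?V graph8 0. 6 \<notin> cnbhd_set ?V graph8 {u} \<and>
      (\<forall>w\<in>cnbhd ?V graph8 6. cnbhd_set ?V graph8 (insert w {u}) = ?V)"
    by code_simp
  have "igv ?V graph8 (Suc 6) {u} \<le> 1" if "u \<in> cnbhd ?V graph8 0" for u
    using strategy that by (intro igv_Suc_le[where v = 6]) (auto simp: igv_dominated)
  then have "igv ?V graph8 (Suc (Suc 6)) {} \<le> 2"
    by (intro igv_Suc_le[where v = 0]) (auto simp: cnbhd_set_def)
  then show ?thesis
    by (simp add: indicated_domination_def)
qed

lemma game_domination_graph8: "3 \<le> game_domination {..<8} graph8"
proof -
  let ?V = "{..<8::nat}"
  have first_move: "legal_moves ?V graph8 {} \<noteq> {}"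
    by code_simp
  have reply: "\<forall>v\<in>legal_moves ?V graph8 {}.
      \<exists>w\<in>legal_moves ?V graph8 {v}. legal_moves ?V graph8 (insert w {v}) \<noteq> {}"
    by code_simp
  \<comment> \<open>fuel is written with \<open>Suc\<close> so that the one-round lemmas apply literally\<close>
  have two_moves: "2 \<le> dgv ?V graph8 (Suc (Suc 5)) {v} False" if v: "v \<in> legal_moves ?V graph8 {}" for v
  proof -
    obtain w where w: "w \<in> legal_moves ?V graph8 {v}" "legal_moves ?V graph8 (insert w {v}) \<noteq> {}"
      using bspec[OF reply v] ..
    have "1 \<le> dgv ?V graph8 (Suc 5) (insert w {v}) True"
      by (rule dgv_Suc_Dominator_ge) (simp_all add: w(2))
    then show ?thesis
      by (intro dgv_Suc_Staller_ge[OF _ w(1)]) simp_all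
  qed
  have "3 \<le> dgv ?V graph8 (Suc (Suc (Suc 5))) {} True"
  proof (rule dgv_Suc_Dominator_ge)
    show "legal_moves ?V graph8 {} \<noteq> {}"
      by (fact first_move)
    fix v
    assume "v \<in> legal_moves ?V graph8 {}"
    from two_moves[OF this] show "3 \<le> Suc (dgv ?V graph8 (Suc (Suc 5)) (insert v {}) False)"
      by simp
  qed simp
  then show ?thesis
    by (simp add: game_domination_def)
qed

lemma upper_irredundance_graph8: "3 \<le> upper_irredundance {..<8} graph8"
proof -
  have "maximal_irredundant {..<8} graph8 {1, 4, 5}"
    unfolding maximal_irredundant_iff by code_simp
  then show ?thesis
    using card_le_upper_irredundance[of "{..<8}"] by fastforce
qed


theorem proposition3p1:
  fixes V :: "'a set" and E :: "'a \<Rightarrow> 'a \<Rightarrow> bool"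
  assumes "fin_graph V E"
  shows "upper_domination V E \<le> indicated_domination V E
       \<and> indicated_domination V E \<le> grundy_domination V E
       \<and> (\<exists>(V1::nat set) E1. fin_graph V1 E1 \<and> indicated_domination V1 E1 > game_domination V1 E1)
       \<and> (\<exists>(V2::nat set) E2. fin_graph V2 E2 \<and> indicated_domination V2 E2 < game_domination V2 E2)
       \<and> (\<exists>(V3::nat set) E3. fin_graph V3 E3 \<and> indicated_domination V3 E3 > upper_irredundance V3 E3)
       \<and> (\<exists>(V4::nat set) E4. fin_graph V4 E4 \<and> indicated_domination V4 E4 < upper_irredundance V4 E4)"
proof (intro conjI)
  show "upper_domination V E \<le> indicated_domination V E"
    by (rule upper_domination_le_indicated_domination[OF assms])
  show "indicated_domination V E \<le> grundy_domination V E"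
    by (rule indicated_domination_le_grundy_domination[OF assms])
  show "\<exists>(V1::nat set) E1. fin_graph V1 E1 \<and> indicated_domination V1 E1 > game_domination V1 E1"
    using fin_graph_path3 path3_game_indicated_domination by force
  show "\<exists>(V2::nat set) E2. fin_graph V2 E2 \<and> indicated_domination V2 E2 < game_domination V2 E2"
    using fin_graph_graph8 indicated_domination_graph8 game_domination_graph8 by force
  show "\<exists>(V3::nat set) E3. fin_graph V3 E3 \<and> indicated_domination V3 E3 > upper_irredundance V3 E3"
    using fin_graph_cycle5 cycle5_irredundance_indicated_domination by force
  show "\<exists>(V4::nat set) E4. fin_graph V4 E4 \<and> indicated_domination V4 E4 < upper_irredundance V4 E4"
    using fin_graph_graph8 indicated_domination_graph8 upper_irredundance_graph8 by force
qed

end
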